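(* Let $m\ge0$ be an integer and $\gamma\ge m+\frac32$, and let $g_{m,\gamma}(x)=(x+1)^m(3-2x)^{-\gamma}$ for $x\in[-1,1]$. Then for all $x\in[-1,1]$, $$I_+^{\gamma-m-3/2}g_{m,\gamma}(x)=\sqrt{\frac\pi5}\,\frac{\Gamma(\gamma-\frac12)}{\Gamma(\gamma)}\,(x+1)^{m+1}(3-2x)^{-(\gamma-1/2)}.$$ In particular, for $\lambda\ge0$ and $\varphi_{2\lambda+3}(\tau)=(3-2\tau)^{-(2\lambda+3)/2}$, $I^\lambda_+\varphi_{2\lambda+3}(x)=\sqrt{\frac\pi5}\frac{\Gamma(\lambda+1)}{\Gamma(\lambda+\frac32)}(x+1)(3-2x)^{-(\lambda+1)}$.
   Context: For $f\in L^1[-1,1]$ and $\mu\ge0$, $I^\mu_+f(x)=(1+x)^{-\mu+1/2}\int_{-1}^x(x-\tau)^{-1/2}(1+\tau)^\mu f(\tau)\,d\tau$. *)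

theory Defs
  imports "HOL-Analysis.Analysis"
begin

definition Iplus :: "real \<Rightarrow> (real \<Rightarrow> real) \<Rightarrow> real \<Rightarrow> real" where
  "Iplus \<mu> f x = (1 + x) powr (- \<mu> + 1/2) *
     (LINT \<tau>:{-1..x}|lborel. (x - \<tau>) powr (-1/2) * (1 + \<tau>) powr \<mu> * f \<tau>)"

definition g_fun :: "nat \<Rightarrow> real \<Rightarrow> real \<Rightarrow> real" where
  "g_fun m \<gamma> x = (x + 1) ^ m * (3 - 2 * x) powr (- \<gamma>)"

definition phi_fun :: "real \<Rightarrow> real \<Rightarrow> real" where
  "phi_fun a \<tau> = (3 - 2 * \<tau>) powr (- a / 2)"

end

theory Submission
  imports Defs
begin

(* For -1 < x < 3/2 the Moebius map u = c (1 + t) / (3 - 2 t), c = (3 - 2 x) / (1 + x), sends [-1, x]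
   increasingly onto [0, 1], with 1 - u = 5 (x - t) / ((1 + x) (3 - 2 t)) and du = 5 c / (3 - 2 t)^2 dt.
   It turns (x - t)^(b-1) (1 + t)^(a-1) (3 - 2 t)^(-(a+b)) dt into a constant multiple of the Beta
   integrand u^(a-1) (1 - u)^(b-1) du. In I_+^mu g_{m,gamma} the weight (1 + t)^mu absorbs (1 + t)^m,
   leaving exactly this integral with a = gamma - 1/2 and b = 1/2, and B(gamma - 1/2, 1/2) =
   Gamma(gamma - 1/2) sqrt pi / Gamma(gamma). The second claim is the case m = 0, gamma = lambda + 3/2. *)

lemma Beta_integrand_Moebius_substitution:
  fixes a b x t :: real
  assumes "-1 < x" "x < 3/2" "-1 \<le> t" "t \<le> x"
  defines "c \<equiv> (3 - 2*x) / (1 + x)"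
  shows "(c*(1+t)/(3-2*t)) powr (a-1) * (1 - c*(1+t)/(3-2*t)) powr (b-1) * (5*c/(3-2*t)^2)
       = c powr a * 5 powr b * (1+x) powr (1-b) *
         ((x-t) powr (b-1) * (1+t) powr (a-1) * (3-2*t) powr (-(a+b)))"
proof -
  consider "t = -1" | "t = x" | "-1 < t" "t < x"
    using assms(3,4) by fastforce
  then show ?thesis
  proof cases
    case 2
    have "1 - c*(1+x)/(3-2*x) = 0"
      using assms(1,2) by (simp add: c_def)
    then show ?thesis using 2 by simp
  next
    case 3
    define P where "P = 3 - 2*t"
    define d where "d = x - t"
    have pos: "1+t > 0" "d > 0" "1+x > 0" "P > 0" "c > 0"
      using assms 3 by (auto simp: c_def P_def d_def)
    have one_minus: "1 - c*(1+t)/P = 5*d/((1+x)*P)"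
      using pos(3,4) by (simp add: c_def P_def d_def divide_simps) (simp add: algebra_simps)
    have "ln ((c*(1+t)/P) powr (a-1) * (5*d/((1+x)*P)) powr (b-1) * (5*c/P^2))
        = (a-1)*(ln c + ln(1+t) - ln P) + (b-1)*(ln 5 + ln d - ln(1+x) - ln P) + (ln 5 + ln c - 2*ln P)"
      using pos by (simp add: ln_mult ln_div ln_realpow)
    also have "\<dots> = ln (c powr a * 5 powr b * (1+x) powr (1-b) *
           (d powr (b-1) * (1+t) powr (a-1) * P powr (-(a+b))))"
      using pos by (simp add: ln_mult algebra_simps)
    finally show ?thesis
      unfolding P_def[symmetric] d_def[symmetric] one_minus using pos by simp
  qed simp
qed

lemma set_integral_Moebius_Beta:
  fixes a b x :: real
  assumes a: "a > 0" and b: "b > 0" and x: "-1 < x" "x < 3/2"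
  shows "(LINT t:{-1..x}|lborel. (x-t) powr (b-1) * (1+t) powr (a-1) * (3-2*t) powr (-(a+b)))
       = Beta a b * (1+x) powr (a+b-1) / (5 powr b * (3-2*x) powr a)"
proof -
  define c where "c = (3 - 2*x) / (1 + x)"
  define g where "g t = c*(1+t)/(3-2*t)" for t :: real
  define g' where "g' t = 5*c/(3-2*t)^2" for t :: real
  define f where "f u = u powr (a-1) * (1-u) powr (b-1)" for u :: real
  define F where "F t = (x-t) powr (b-1) * (1+t) powr (a-1) * (3-2*t) powr (-(a+b))" for t
  define K where "K = c powr a * 5 powr b * (1+x) powr (1-b)"
  have c_pos: "c > 0" and K_pos: "K > 0"
    using x by (auto simp: c_def K_def)
  have g_ends: "g (-1) = 0" "g x = 1"
    using x by (auto simp: g_def c_def)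
  have int: "set_integrable lborel {g (-1)..g x} f"
    unfolding g_ends f_def using a b by (rule integrable_Beta)
  have deriv: "(g has_real_derivative g' t) (at t)" if "t \<in> {-1..x}" for t
    using that x unfolding g_def g'_def
    by (auto intro!: derivative_eq_intros simp: field_simps power2_eq_square)
  have "continuous_on {-1..x} g'"
    unfolding g'_def using x by (intro continuous_intros) auto
  from integral_substitution(2)[OF int deriv this _] c_pos x
  have "(LBINT u. f u * indicator {0..1} u) = (LBINT t. f (g t) * g' t * indicator {-1..x} t)"
    by (simp add: g_ends g'_def)
  also have "\<dots> = (LBINT t. K * (indicator {-1..x} t *\<^sub>R F t))"
  proof (intro Bochner_Integration.integral_cong)
    fix t
    have "f (g t) * g' t = K * F t" if "t \<in> {-1..x}"
      using Beta_integrand_Moebius_substitution[of x t a b] x that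
      unfolding f_def g_def g'_def F_def K_def c_def by simp
    then show "f (g t) * g' t * indicator {-1..x} t = K * (indicator {-1..x} t *\<^sub>R F t)"
      by (simp add: indicator_def)
  qed simp
  finally have "Beta a b = K * (LINT t:{-1..x}|lborel. F t)"
    using has_integral_Beta_real[OF a b] set_borel_integral_eq_integral(2)[OF integrable_Beta[OF a b]]
    by (simp add: set_lebesgue_integral_def f_def mult.commute integral_unique)
  moreover have "K = 5 powr b * (3-2*x) powr a / (1+x) powr (a+b-1)"
    using x by (simp add: K_def c_def powr_divide powr_diff powr_add field_simps)
  ultimately show ?thesis
    using K_pos x unfolding F_def by (simp add: field_simps)
qed

lemma Iplus_g_fun:
  fixes m :: nat and \<gamma> x :: real
  assumes \<gamma>: "\<gamma> > 1/2" and x: "-1 \<le> x" "x < 3/2"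
  shows "Iplus (\<gamma> - real m - 3/2) (g_fun m \<gamma>) x =
           sqrt (pi / 5) * (Gamma (\<gamma> - 1/2) / Gamma \<gamma>) *
           (x + 1) ^ (m + 1) * (3 - 2 * x) powr (- (\<gamma> - 1/2))"
proof (cases "x = -1")
  case False
  define \<mu> where "\<mu> = \<gamma> - real m - 3/2"
  define a where "a = \<gamma> - 1/2"
  have a: "a > 0" and x_gt: "-1 < x" and x_pos: "1 + x > 0" "3 - 2*x > 0"
    using \<gamma> x False by (auto simp: a_def)
  have "(x - t) powr (-1/2) * (1 + t) powr \<mu> * g_fun m \<gamma> t
      = (x - t) powr (1/2 - 1) * (1 + t) powr (a - 1) * (3 - 2*t) powr (-(a + 1/2))"
    if "-1 \<le> t" for t
  proof (cases "t = -1")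
    case False
    then have "(1 + t) powr \<mu> * (t + 1) ^ m = (1 + t) powr (a - 1)"
      using that by (simp add: powr_realpow [symmetric] powr_add [symmetric] add.commute \<mu>_def a_def)
    then show ?thesis
      by (simp add: g_fun_def a_def mult.assoc)
  qed simp
  then have "(LINT t:{-1..x}|lborel. (x - t) powr (-1/2) * (1 + t) powr \<mu> * g_fun m \<gamma> t)
      = Beta a (1/2) * (1 + x) powr (a - 1/2) / (5 powr (1/2) * (3 - 2*x) powr a)"
    using set_integral_Moebius_Beta[of a "1/2" x] a x_gt x(2)
    by (subst set_lebesgue_integral_cong[where g = "\<lambda>t. (x - t) powr (1/2 - 1) * (1 + t) powr (a - 1) *
        (3 - 2*t) powr (-(a + 1/2))"]) auto
  then have "Iplus \<mu> (g_fun m \<gamma>) x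
      = (1 + x) powr (-\<mu> + 1/2) * (Beta a (1/2) * (1 + x) powr (a - 1/2) / (5 powr (1/2) * (3 - 2*x) powr a))"
    by (simp add: Iplus_def)
  also have "\<dots> = sqrt pi / sqrt 5 * (Gamma a / Gamma \<gamma>) * (1 + x) powr (real m + 1) / (3 - 2*x) powr a"
  proof -
    have "Beta a (1/2) = Gamma a * sqrt pi / Gamma \<gamma>"
      by (simp add: Beta_def Gamma_one_half_real a_def)
    moreover have "(1 + x) powr (-\<mu> + 1/2) * (1 + x) powr (a - 1/2) = (1 + x) powr (real m + 1)"
      by (simp add: powr_add [symmetric] \<mu>_def a_def add.commute)
    ultimately show ?thesis
      by (simp add: powr_half_sqrt [symmetric] field_simps)
  qed
  also have "(1 + x) powr (real m + 1) = (x + 1) ^ (m + 1)"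
    using powr_realpow [of "1 + x" "m + 1"] x_pos by (simp add: add_ac)
  finally show ?thesis
    unfolding powr_minus_divide by (simp add: \<mu>_def a_def real_sqrt_divide)
qed (simp add: Iplus_def)

theorem mainTheorem11:
  fixes m :: nat and \<gamma> :: real
  assumes "\<gamma> \<ge> real m + 3/2"
  shows "(\<forall>x\<in>{-1..1::real}.
           Iplus (\<gamma> - real m - 3/2) (g_fun m \<gamma>) x =
             sqrt (pi / 5) * (Gamma (\<gamma> - 1/2) / Gamma \<gamma>) *
             (x + 1) ^ (m + 1) * (3 - 2 * x) powr (- (\<gamma> - 1/2)))
       \<and> (\<forall>lam::real. lam \<ge> 0 \<longrightarrow> (\<forall>x\<in>{-1..1::real}.
           Iplus lam (phi_fun (2 * lam + 3)) x =
             sqrt (pi / 5) * (Gamma (lam + 1) / Gamma (lam + 3/2)) *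
             (x + 1) * (3 - 2 * x) powr (- (lam + 1))))"
proof (intro conjI ballI allI impI)
  fix x :: real
  assume "x \<in> {-1..1}"
  with assms show "Iplus (\<gamma> - real m - 3/2) (g_fun m \<gamma>) x =
      sqrt (pi / 5) * (Gamma (\<gamma> - 1/2) / Gamma \<gamma>) *
      (x + 1) ^ (m + 1) * (3 - 2 * x) powr (- (\<gamma> - 1/2))"
    by (intro Iplus_g_fun) auto
next
  fix lam x :: real
  assume "lam \<ge> 0" "x \<in> {-1..1}"
  moreover have "phi_fun (2 * lam + 3) = g_fun 0 (lam + 3/2)"
  proof -
    have "- (2 * lam + 3) / 2 = - (lam + 3/2)"
      by simp
    then show ?thesis
      unfolding phi_fun_def g_fun_def by (simp only: power_0 mult_1_left)
  qed
  ultimately show "Iplus lam (phi_fun (2 * lam + 3)) x =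
      sqrt (pi / 5) * (Gamma (lam + 1) / Gamma (lam + 3/2)) *
      (x + 1) * (3 - 2 * x) powr (- (lam + 1))"
    using Iplus_g_fun[of "lam + 3/2" x 0] by (simp add: add_ac)
qed

end
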